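(* Define in $\mathcal{S}$ the polynomials $A_1=x_3$, $A_2=x_4$, $A_3=x_1^2+x_2^2$, $A_4=x_1x_5+x_2x_6$, $A_5=x_1x_6-x_2x_5$, $A_6=x_5^2+x_6^2$. Each $A_j$ Poisson-commutes with $x_3$, and they span (as generators) a Poisson subalgebra whose only nonzero brackets among generators (up to antisymmetry) are $\{A_2,A_3\}=-2A_3$, $\{A_2,A_6\}=2A_6$, $\{A_3,A_4\}=4A_2A_3$, $\{A_3,A_5\}=4A_1A_3$, $\{A_3,A_6\}=8(A_2A_4+A_1A_5)$, $\{A_4,A_6\}=4A_2A_6$, $\{A_5,A_6\}=4A_1A_6$. Moreover $A_1$, $A_4-A_2^2$ and $A_5-2A_1A_2$ Poisson-commute with every $A_j$.
   Context: $\mathcal{S}=\mathbb{R}[x_1,\dots,x_6]$ is the Lie–Poisson algebra of $\mathfrak{c}(2)$: its bracket is determined by the Leibniz rule and the nonzero brackets ($i<j$) $\{x_1,x_3\}=-x_2$, $\{x_1,x_4\}=x_1$, $\{x_1,x_5\}=2x_4$, $\{x_1,x_6\}=2x_3$, $\{x_2,x_3\}=x_1$, $\{x_2,x_4\}=x_2$, $\{x_2,x_5\}=-2x_3$, $\{x_2,x_6\}=2x_4$, $\{x_3,x_5\}=x_6$, $\{x_3,x_6\}=-x_5$, $\{x_4,x_5\}=x_5$, $\{x_4,x_6\}=x_6$. *)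

theory Defs
  imports "HOL-Analysis.Analysis"
begin

text \<open>Elements of S = R[x1..x6] are represented by their polynomial functions
  on points x :: nat => real (coordinates x 1, ..., x 6).  The Lie-Poisson
  bracket determined by the Leibniz rule and the brackets of the generators is
  {f,g} = sum_{i,j} {x_i,x_j} * d_i f * d_j g.\<close>

definition pd :: "nat \<Rightarrow> ((nat \<Rightarrow> real) \<Rightarrow> real) \<Rightarrow> (nat \<Rightarrow> real) \<Rightarrow> real" where
  "pd i f x = deriv (\<lambda>t. f (x(i := t))) (x i)"

text \<open>Brackets {x_i, x_j} for i < j (structure constants of c(2)).\<close>
definition lie_up :: "nat \<Rightarrow> nat \<Rightarrow> (nat \<Rightarrow> real) \<Rightarrow> real" where
  "lie_up i j x =
    (if (i,j) = (1,3) then - x 2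
     else if (i,j) = (1,4) then x 1
     else if (i,j) = (1,5) then 2 * x 4
     else if (i,j) = (1,6) then 2 * x 3
     else if (i,j) = (2,3) then x 1
     else if (i,j) = (2,4) then x 2
     else if (i,j) = (2,5) then - 2 * x 3
     else if (i,j) = (2,6) then 2 * x 4
     else if (i,j) = (3,5) then x 6
     else if (i,j) = (3,6) then - x 5
     else if (i,j) = (4,5) then x 5
     else if (i,j) = (4,6) then x 6
     else 0)"

definition lie :: "nat \<Rightarrow> nat \<Rightarrow> (nat \<Rightarrow> real) \<Rightarrow> real" where
  "lie i j x = (if i < j then lie_up i j x else if j < i then - lie_up j i x else 0)"

definition pbr :: "((nat \<Rightarrow> real) \<Rightarrow> real) \<Rightarrow> ((nat \<Rightarrow> real) \<Rightarrow> real) \<Rightarrow> (nat \<Rightarrow> real) \<Rightarrow> real" where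
  "pbr f g x = (\<Sum>i\<in>{1..6}. \<Sum>j\<in>{1..6}. lie i j x * pd i f x * pd j g x)"

definition Xc :: "nat \<Rightarrow> (nat \<Rightarrow> real) \<Rightarrow> real" where
  "Xc i x = x i"

definition A :: "nat \<Rightarrow> (nat \<Rightarrow> real) \<Rightarrow> real" where
  "A j x =
    (if j = 1 then x 3
     else if j = 2 then x 4
     else if j = 3 then x 1 ^ 2 + x 2 ^ 2
     else if j = 4 then x 1 * x 5 + x 2 * x 6
     else if j = 5 then x 1 * x 6 - x 2 * x 5
     else if j = 6 then x 5 ^ 2 + x 6 ^ 2
     else 0)"

end

theory Submission
  imports Defs
begin

text \<open>The bracket is the antisymmetric bilinear form in the gradients with the twelve
  structure constants of c(2), so once the gradients of the generators are known every claim
  is a polynomial identity.  Since A 1 = x3, the invariance of A 1 is the statement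
  {A j, x3} = 0 read through antisymmetry.\<close>

lemma has_real_derivative_fun_upd_coordinate [derivative_intros]:
  "((\<lambda>t. (x(i := t)) k) has_real_derivative (if k = i then 1 else 0)) F"
  by (cases "k = i") (auto intro!: derivative_eq_intros)

lemma pd_eqI:
  assumes "\<And>x. ((\<lambda>t. f (x(i := t))) has_real_derivative D x) (at (x i))"
  shows "pd i f = D"
  using assms unfolding pd_def by (auto intro!: DERIV_imp_deriv)

lemma pbr_antisym: "pbr f g x = - pbr g f x"
  unfolding pbr_def lie_def by (subst sum.swap) (auto simp: sum_negf[symmetric] intro!: sum.cong)

lemma pbr_expand:
  "pbr f g x =
      - x 2 * (pd 1 f x * pd 3 g x - pd 3 f x * pd 1 g x)
    + x 1 * (pd 1 f x * pd 4 g x - pd 4 f x * pd 1 g x)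
    + 2 * x 4 * (pd 1 f x * pd 5 g x - pd 5 f x * pd 1 g x)
    + 2 * x 3 * (pd 1 f x * pd 6 g x - pd 6 f x * pd 1 g x)
    + x 1 * (pd 2 f x * pd 3 g x - pd 3 f x * pd 2 g x)
    + x 2 * (pd 2 f x * pd 4 g x - pd 4 f x * pd 2 g x)
    - 2 * x 3 * (pd 2 f x * pd 5 g x - pd 5 f x * pd 2 g x)
    + 2 * x 4 * (pd 2 f x * pd 6 g x - pd 6 f x * pd 2 g x)
    + x 6 * (pd 3 f x * pd 5 g x - pd 5 f x * pd 3 g x)
    - x 5 * (pd 3 f x * pd 6 g x - pd 6 f x * pd 3 g x)
    + x 5 * (pd 4 f x * pd 5 g x - pd 5 f x * pd 4 g x)
    + x 6 * (pd 4 f x * pd 6 g x - pd 6 f x * pd 4 g x)"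
  by (simp add: pbr_def lie_def lie_up_def numeral_eq_Suc algebra_simps)

lemma A1_eq_Xc3: "A 1 = Xc 3"
  by (simp add: A_def Xc_def fun_eq_iff)

lemma pd_Xc: "pd i (Xc k) = (\<lambda>x. if i = k then 1 else 0)"
  by (rule pd_eqI) (auto simp: Xc_def intro!: derivative_eq_intros)

lemma pd_A1: "pd i (A 1) = (\<lambda>x. if i = 3 then 1 else 0)"
  by (simp add: A1_eq_Xc3 pd_Xc del: One_nat_def)

lemma pd_A2: "pd i (A 2) = (\<lambda>x. if i = 4 then 1 else 0)"
  by (rule pd_eqI) (auto simp: A_def intro!: derivative_eq_intros)

lemma pd_A3: "pd i (A 3) = (\<lambda>x. if i = 1 then 2 * x 1 else if i = 2 then 2 * x 2 else 0)"
  by (rule pd_eqI) (auto simp: A_def intro!: derivative_eq_intros)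

lemma pd_A4:
  "pd i (A 4) =
    (\<lambda>x. if i = 1 then x 5 else if i = 2 then x 6 else if i = 5 then x 1 else if i = 6 then x 2 else 0)"
  by (rule pd_eqI) (auto simp: A_def intro!: derivative_eq_intros)

lemma pd_A5:
  "pd i (A 5) =
    (\<lambda>x. if i = 1 then x 6 else if i = 2 then - x 5 else if i = 5 then - x 2 else if i = 6 then x 1 else 0)"
  by (rule pd_eqI) (auto simp: A_def intro!: derivative_eq_intros)

lemma pd_A6: "pd i (A 6) = (\<lambda>x. if i = 5 then 2 * x 5 else if i = 6 then 2 * x 6 else 0)"
  by (rule pd_eqI) (auto simp: A_def intro!: derivative_eq_intros)

lemma pd_casimir_A4:
  "pd i (\<lambda>x. A 4 x - A 2 x ^ 2) =
    (\<lambda>x. if i = 1 then x 5 else if i = 2 then x 6 else if i = 4 then - 2 * x 4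
         else if i = 5 then x 1 else if i = 6 then x 2 else 0)"
  by (rule pd_eqI) (auto simp: A_def intro!: derivative_eq_intros)

lemma pd_casimir_A5:
  "pd i (\<lambda>x. A 5 x - 2 * A 1 x * A 2 x) =
    (\<lambda>x. if i = 1 then x 6 else if i = 2 then - x 5 else if i = 3 then - 2 * x 4
         else if i = 4 then - 2 * x 3 else if i = 5 then - x 2 else if i = 6 then x 1 else 0)"
  by (rule pd_eqI) (auto simp: A_def intro!: derivative_eq_intros)

lemmas pd_generators = pd_Xc pd_A1 pd_A2 pd_A3 pd_A4 pd_A5 pd_A6

lemma atLeastAtMost_1_6: "{1..6::nat} = {1, 2, 3, 4, 5, 6}"
  by auto

\<comment> \<open>One_nat_def would rewrite A 1 to A (Suc 0) before pd_A1 can fire.\<close>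
lemma pbr_A_Xc3: "j \<in> {1..6} \<Longrightarrow> pbr (A j) (Xc 3) = (\<lambda>x. 0)"
  unfolding atLeastAtMost_1_6 by (auto simp: fun_eq_iff pbr_expand pd_generators simp del: One_nat_def)

lemma pbr_A1_A: "j \<in> {1..6} \<Longrightarrow> pbr (A 1) (A j) = (\<lambda>x. 0)"
  using pbr_A_Xc3 unfolding A1_eq_Xc3 by (simp add: fun_eq_iff pbr_antisym[of "Xc 3"])

lemma pbr_A_brackets:
  shows "pbr (A 2) (A 3) = (\<lambda>x. - 2 * A 3 x)"
    and "pbr (A 2) (A 4) = (\<lambda>x. 0)"
    and "pbr (A 2) (A 5) = (\<lambda>x. 0)"
    and "pbr (A 2) (A 6) = (\<lambda>x. 2 * A 6 x)"
    and "pbr (A 3) (A 4) = (\<lambda>x. 4 * A 2 x * A 3 x)"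
    and "pbr (A 3) (A 5) = (\<lambda>x. 4 * A 1 x * A 3 x)"
    and "pbr (A 3) (A 6) = (\<lambda>x. 8 * (A 2 x * A 4 x + A 1 x * A 5 x))"
    and "pbr (A 4) (A 5) = (\<lambda>x. 0)"
    and "pbr (A 4) (A 6) = (\<lambda>x. 4 * A 2 x * A 6 x)"
    and "pbr (A 5) (A 6) = (\<lambda>x. 4 * A 1 x * A 6 x)"
  by (simp_all add: fun_eq_iff pbr_expand pd_generators)
    (simp_all add: A_def algebra_simps power2_eq_square)

lemma pbr_casimir_A4_A: "j \<in> {1..6} \<Longrightarrow> pbr (\<lambda>x. A 4 x - A 2 x ^ 2) (A j) = (\<lambda>x. 0)"
  unfolding atLeastAtMost_1_6 fun_eq_iff pbr_expand pd_casimir_A4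
  by (auto simp: pd_generators algebra_simps simp del: One_nat_def)

lemma pbr_casimir_A5_A: "j \<in> {1..6} \<Longrightarrow> pbr (\<lambda>x. A 5 x - 2 * A 1 x * A 2 x) (A j) = (\<lambda>x. 0)"
  unfolding atLeastAtMost_1_6 fun_eq_iff pbr_expand pd_casimir_A5
  by (auto simp: pd_generators algebra_simps simp del: One_nat_def)

theorem mainTheorem9:
  shows "(\<forall>j\<in>{1..6}. pbr (A j) (Xc 3) = (\<lambda>x. 0))
    \<and> (\<forall>i\<in>{1..6}. \<forall>j\<in>{1..6}. pbr (A i) (A j) = (\<lambda>x. - pbr (A j) (A i) x))
    \<and> pbr (A 1) (A 2) = (\<lambda>x. 0)
    \<and> pbr (A 1) (A 3) = (\<lambda>x. 0)
    \<and> pbr (A 1) (A 4) = (\<lambda>x. 0)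
    \<and> pbr (A 1) (A 5) = (\<lambda>x. 0)
    \<and> pbr (A 1) (A 6) = (\<lambda>x. 0)
    \<and> pbr (A 2) (A 3) = (\<lambda>x. - 2 * A 3 x)
    \<and> pbr (A 2) (A 4) = (\<lambda>x. 0)
    \<and> pbr (A 2) (A 5) = (\<lambda>x. 0)
    \<and> pbr (A 2) (A 6) = (\<lambda>x. 2 * A 6 x)
    \<and> pbr (A 3) (A 4) = (\<lambda>x. 4 * A 2 x * A 3 x)
    \<and> pbr (A 3) (A 5) = (\<lambda>x. 4 * A 1 x * A 3 x)
    \<and> pbr (A 3) (A 6) = (\<lambda>x. 8 * (A 2 x * A 4 x + A 1 x * A 5 x))
    \<and> pbr (A 4) (A 5) = (\<lambda>x. 0)
    \<and> pbr (A 4) (A 6) = (\<lambda>x. 4 * A 2 x * A 6 x)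
    \<and> pbr (A 5) (A 6) = (\<lambda>x. 4 * A 1 x * A 6 x)
    \<and> (\<forall>j\<in>{1..6}. pbr (A 1) (A j) = (\<lambda>x. 0))
    \<and> (\<forall>j\<in>{1..6}. pbr (\<lambda>x. A 4 x - A 2 x ^ 2) (A j) = (\<lambda>x. 0))
    \<and> (\<forall>j\<in>{1..6}. pbr (\<lambda>x. A 5 x - 2 * A 1 x * A 2 x) (A j) = (\<lambda>x. 0))"
  by (intro conjI ballI pbr_A_Xc3 pbr_A1_A pbr_A_brackets pbr_casimir_A4_A pbr_casimir_A5_A)
    (auto intro: ext pbr_antisym)

end
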